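(* Let $X,Y$ be based spaces, $r\colon X\to Y$ and $l\colon Y\to X$ based maps, and $h\colon X\times[0,1]\to X$ a based homotopy from $\mathrm{id}_X$ to $l\circ r$. Then there are explicit mutually inverse homotopy equivalences $\chi\colon\mathrm{hofib}(r)\to\Omega\,\mathrm{hofib}(l)$ and $\chi^{-1}\colon\Omega\,\mathrm{hofib}(l)\to\mathrm{hofib}(r)$ (homotopy fibres over the basepoints).
   Context: Homotopy fibres use the path-space model: $\mathrm{hofib}(r)=\{(x,\gamma)\in X\times\mathrm{Map}([0,1],Y):\gamma(0)=r(x),\gamma(1)=*\}$, and $\Omega$ denotes based loops. *)

theory Defs
  imports "HOL-Analysis.Analysis"
begin

definition mapspace :: "'a topology \<Rightarrow> 'b topology \<Rightarrow> ('a \<Rightarrow> 'b) set" where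
  "mapspace S T = {f. continuous_map S T f \<and> f \<in> extensional (topspace S)}"

definition compact_open :: "'a topology \<Rightarrow> 'b topology \<Rightarrow> ('a \<Rightarrow> 'b) topology" where
  "compact_open S T =
     topology_generated_by
       {{f \<in> mapspace S T. f ` K \<subseteq> U} | K U. compactin S K \<and> openin T U}"

abbreviation unit_interval :: "real topology" where
  "unit_interval \<equiv> top_of_set {0..1}"

definition hofib :: "'a topology \<Rightarrow> 'b topology \<Rightarrow> 'b \<Rightarrow> ('a \<Rightarrow> 'b)
                     \<Rightarrow> ('a \<times> (real \<Rightarrow> 'b)) topology" where
  "hofib X Y y0 r =
     subtopology (prod_topology X (compact_open unit_interval Y))
       {(x, \<gamma>). \<gamma> 0 = r x \<and> \<gamma> 1 = y0}"

definition hofib_base :: "'a \<Rightarrow> 'b \<Rightarrow> 'a \<times> (real \<Rightarrow> 'b)" where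
  "hofib_base x0 y0 = (x0, restrict (\<lambda>t. y0) {0..1})"

definition loopspace :: "'c topology \<Rightarrow> 'c \<Rightarrow> (real \<Rightarrow> 'c) topology" where
  "loopspace Z z0 = subtopology (compact_open unit_interval Z) {\<gamma>. \<gamma> 0 = z0 \<and> \<gamma> 1 = z0}"

end

theory Submission
  imports Defs
begin

text \<open>
  The path space \<open>P X = hofib(id\<^sub>X)\<close> over \<open>x0\<close> is contractible, and the homotopy fibre of any based
  map out of a contractible space is equivalent to the loop space of its target. Apply this to the
  map \<open>transfer : P X \<rightarrow> hofib(l)\<close> sending \<open>(x, \<delta>)\<close> to \<open>r x\<close> together with the path that runs back
  from \<open>l (r x)\<close> to \<open>x\<close> along \<open>h\<close> and then along \<open>\<delta>\<close>. A point of \<open>hofib(transfer)\<close> is a point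
  \<open>(x, y)\<close> of \<open>hofib(r)\<close> together with a square in \<open>X\<close> whose values on an arc \<open>K\<close> of its boundary
  (bottom, top and right edge and the lower half of the left edge) are prescribed by \<open>x\<close>, \<open>y\<close>
  and \<open>h\<close>. As \<open>K\<close> is a retract of the square, forgetting the square is a homotopy equivalence
  \<open>hofib(transfer) \<rightarrow> hofib(r)\<close>, whose inverse fills in the square by composing the boundary data
  with the retraction.
\<close>

section \<open>Paths in the compact-open topology\<close>

lemma topspace_compact_open [simp]: "topspace (compact_open S T) = mapspace S T"
proof -
  have "mapspace S T \<in> {{f \<in> mapspace S T. f ` K \<subseteq> U} | K U. compactin S K \<and> openin T U}"
    by (rule CollectI, rule exI[of _ "{}"], rule exI[of _ "topspace T"]) auto
  then show ?thesis
    unfolding compact_open_def topology_generated_by_topspace by blast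
qed

lemma openin_compact_open_basic:
  assumes "compactin S K" "openin T U"
  shows "openin (compact_open S T) {f \<in> mapspace S T. f ` K \<subseteq> U}"
  unfolding compact_open_def by (rule topology_generated_by_Basis) (use assms in blast)

lemma restrict_in_mapspace:
  "continuous_map S T f \<Longrightarrow> restrict f (topspace S) \<in> mapspace S T"
  unfolding mapspace_def by (auto intro: continuous_map_eq[of S T f])

lemma restrict_mapspace:
  "\<gamma> \<in> mapspace S T \<Longrightarrow> restrict \<gamma> (topspace S) = \<gamma>"
  by (auto simp: mapspace_def extensional_def restrict_def)

lemma restrict_path_eqI:
  assumes "\<gamma> \<in> mapspace unit_interval T" "\<And>s. s \<in> {0..1} \<Longrightarrow> f s = \<gamma> s"
  shows "restrict f {0..1} = \<gamma>"
  by (metis assms restrict_ext restrict_mapspace topspace_euclidean_subtopology)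

lemma mapspace_in_topspace:
  "\<gamma> \<in> mapspace unit_interval T \<Longrightarrow> t \<in> {0..1} \<Longrightarrow> \<gamma> t \<in> topspace T"
  by (auto simp: mapspace_def continuous_map_def)

lemma openin_tube_slices:
  assumes W: "openin (prod_topology Z S) W" and K: "compactin S K"
  shows "openin Z {z \<in> topspace Z. {z} \<times> K \<subseteq> W}"
proof (subst openin_subopen, intro ballI)
  fix z assume z: "z \<in> {z \<in> topspace Z. {z} \<times> K \<subseteq> W}"
  then obtain U V where U: "openin Z U" "z \<in> U" and UV: "K \<subseteq> V" "U \<times> V \<subseteq> W"
    using tube_lemma_right[OF W K, of z] by auto
  have "U \<subseteq> {z \<in> topspace Z. {z} \<times> K \<subseteq> W}"
    using UV openin_subset[OF U(1)] by blast
  then show "\<exists>T. openin Z T \<and> z \<in> T \<and> T \<subseteq> {z \<in> topspace Z. {z} \<times> K \<subseteq> W}"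
    using U by blast
qed

lemma restrict_slice_in_mapspace:
  assumes "continuous_map (prod_topology Z S) T (\<lambda>w. F (fst w) (snd w))" "z \<in> topspace Z"
  shows "restrict (F z) (topspace S) \<in> mapspace S T"
proof (rule restrict_in_mapspace)
  have "continuous_map S (prod_topology Z S) (\<lambda>s. (z, s))"
    using assms(2) by (simp add: continuous_map_paired)
  from continuous_map_compose[OF this assms(1)] show "continuous_map S T (F z)"
    by (simp add: o_def)
qed

lemma continuous_map_compact_open_curry:
  assumes F: "continuous_map (prod_topology Z S) T (\<lambda>w. F (fst w) (snd w))"
  shows "continuous_map Z (compact_open S T) (\<lambda>z. restrict (F z) (topspace S))"
  unfolding compact_open_def
proof (rule continuous_on_generated_topo)
  show "(\<lambda>z. restrict (F z) (topspace S)) ` topspace Z \<subseteq>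
      \<Union> {{f \<in> mapspace S T. f ` K \<subseteq> U} | K U. compactin S K \<and> openin T U}"
    using restrict_slice_in_mapspace[OF F]
      topspace_compact_open[of S T, unfolded compact_open_def topology_generated_by_topspace]
    by blast
next
  fix V assume "V \<in> {{f \<in> mapspace S T. f ` K \<subseteq> U} | K U. compactin S K \<and> openin T U}"
  then obtain K U where V: "V = {f \<in> mapspace S T. f ` K \<subseteq> U}"
    and K: "compactin S K" and U: "openin T U"
    by blast
  have KS: "K \<subseteq> topspace S"
    using K compactin_subset_topspace by blast
  let ?W = "{w \<in> topspace (prod_topology Z S). F (fst w) (snd w) \<in> U}"
  have "(\<lambda>z. restrict (F z) (topspace S)) -` V \<inter> topspace Z = {z \<in> topspace Z. {z} \<times> K \<subseteq> ?W}"
  proof (intro set_eqI iffI)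
    fix z assume z: "z \<in> (\<lambda>z. restrict (F z) (topspace S)) -` V \<inter> topspace Z"
    have "F z s \<in> U" if "s \<in> K" for s
    proof -
      have "restrict (F z) (topspace S) s \<in> U"
        using z that by (auto simp: V)
      then show ?thesis
        using KS that by auto
    qed
    then show "z \<in> {z \<in> topspace Z. {z} \<times> K \<subseteq> ?W}"
      using z KS by auto
  next
    fix z assume z: "z \<in> {z \<in> topspace Z. {z} \<times> K \<subseteq> ?W}"
    then have "restrict (F z) (topspace S) ` K \<subseteq> U"
      using KS by auto
    then show "z \<in> (\<lambda>z. restrict (F z) (topspace S)) -` V \<inter> topspace Z"
      using z restrict_slice_in_mapspace[OF F] by (auto simp: V)
  qed
  also have "openin Z \<dots>"
    using F U by (intro openin_tube_slices[OF _ K]) (simp add: continuous_map)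
  finally show "openin Z ((\<lambda>z. restrict (F z) (topspace S)) -` V \<inter> topspace Z)" .
qed

lemma continuous_map_path_eval:
  "continuous_map (prod_topology (compact_open unit_interval T) unit_interval) T (\<lambda>(f, t). f t)"
  unfolding continuous_map
proof (intro conjI allI impI)
  show "(\<lambda>(f, t). f t) ` topspace (prod_topology (compact_open unit_interval T) unit_interval) \<subseteq> topspace T"
    by (auto simp: mapspace_def continuous_map_def)
next
  fix U assume U: "openin T U"
  let ?W = "{p \<in> topspace (prod_topology (compact_open unit_interval T) unit_interval). (\<lambda>(f, t). f t) p \<in> U}"
  show "openin (prod_topology (compact_open unit_interval T) unit_interval) ?W"
  proof (subst openin_subopen, intro ballI)
    fix p assume p: "p \<in> ?W"
    then obtain f t where p_eq: "p = (f, t)" and f: "f \<in> mapspace unit_interval T"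
      and t: "t \<in> {0..1}" and ftU: "f t \<in> U"
      by auto
    have "openin (top_of_set {0..1}) {s \<in> {0..1}. f s \<in> U}"
      using f U by (simp add: mapspace_def continuous_map)
    then obtain e where e: "e > 0" "\<And>s. s \<in> {0..1} \<Longrightarrow> dist s t < e \<Longrightarrow> f s \<in> U"
      using t ftU unfolding openin_euclidean_subtopology_iff by blast
    define K where "K = {max 0 (t - e/2) .. min 1 (t + e/2)}"
    define N where "N = {g \<in> mapspace unit_interval T. g ` K \<subseteq> U}"
    define M where "M = {0..1} \<inter> {t - e/2 <..< t + e/2}"
    have "compactin unit_interval K"
      by (auto simp: K_def compactin_subtopology compactin_euclidean_iff)
    then have "openin (compact_open unit_interval T) N"
      unfolding N_def using U by (rule openin_compact_open_basic)
    moreover have "openin unit_interval M"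
      unfolding M_def by (auto intro: openin_subtopology_Int2)
    ultimately have "openin (prod_topology (compact_open unit_interval T) unit_interval) (N \<times> M)"
      by (simp add: openin_prod_Times_iff)
    moreover have "f ` K \<subseteq> U"
      using e by (force simp: K_def dist_real_def)
    then have "p \<in> N \<times> M"
      using p_eq f t e(1) by (auto simp: N_def M_def)
    moreover have "N \<times> M \<subseteq> ?W"
      using e(1) by (force simp: N_def M_def K_def)
    ultimately show "\<exists>T'. openin (prod_topology (compact_open unit_interval T) unit_interval) T' \<and> p \<in> T' \<and> T' \<subseteq> ?W"
      by blast
  qed
qed

lemma continuous_map_path_apply:
  assumes "continuous_map Z (compact_open unit_interval T) G" "continuous_map Z unit_interval p"
  shows "continuous_map Z T (\<lambda>z. G z (p z))"
  using continuous_map_compose[OF continuous_map_pairedI[OF assms] continuous_map_path_eval]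
  by (simp add: o_def)

corollary continuous_map_path_curry:
  "continuous_map (prod_topology Z unit_interval) T (\<lambda>w. F (fst w) (snd w)) \<Longrightarrow>
    continuous_map Z (compact_open unit_interval T) (\<lambda>z. restrict (F z) {0..1})"
  using continuous_map_compact_open_curry[of Z unit_interval T F] by simp

lemma continuous_map_compose_pair:
  "\<lbrakk>continuous_map (prod_topology X Y) T k; continuous_map Z X a; continuous_map Z Y b\<rbrakk>
    \<Longrightarrow> continuous_map Z T (\<lambda>z. k (a z, b z))"
  using continuous_map_compose[of Z "prod_topology X Y" "\<lambda>z. (a z, b z)" T k]
  by (simp add: o_def continuous_map_pairedI)

lemma continuous_map_fst_comp:
  "continuous_map Z (prod_topology X Y) p \<Longrightarrow> continuous_map Z X (\<lambda>z. fst (p z))"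
  by (simp add: continuous_map_pairwise o_def)

lemma continuous_map_snd_comp:
  "continuous_map Z (prod_topology X Y) p \<Longrightarrow> continuous_map Z Y (\<lambda>z. snd (p z))"
  by (simp add: continuous_map_pairwise o_def)

lemma continuous_map_ident: "continuous_map X X (\<lambda>x. x)"
  unfolding id_def[symmetric] by (rule continuous_map_id)

lemma continuous_map_interval_real:
  "continuous_map Z (top_of_set S) f \<Longrightarrow> continuous_map Z euclideanreal f"
  by (simp add: continuous_map_in_subtopology)

text \<open>The goals \<open>continuous_map Z (prod_topology \<dots>) (\<lambda>z. z)\<close> left over by \<open>intro\<close> with these rules
  have schematic targets, which \<open>intro\<close> does not instantiate; they are closed by
  \<open>rule continuous_map_ident\<close>.\<close>
lemmas coordinate_intros = continuous_map_interval_real continuous_map_fst_comp continuous_map_snd_comp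

lemma continuous_map_euclidean_pair:
  "continuous_map Z euclidean a \<Longrightarrow> continuous_map Z euclidean b \<Longrightarrow> continuous_map Z euclidean (\<lambda>z. (a z, b z))"
  using continuous_map_pairedI[of Z euclidean a euclidean b] by simp

lemma continuous_map_euclidean_fst:
  "continuous_map Z euclidean p \<Longrightarrow> continuous_map Z euclideanreal (\<lambda>z. fst (p z))"
  using continuous_map_fst_comp[of Z euclidean euclidean p] by simp

lemma continuous_map_euclidean_snd:
  "continuous_map Z euclidean p \<Longrightarrow> continuous_map Z euclideanreal (\<lambda>z. snd (p z))"
  using continuous_map_snd_comp[of Z euclidean euclidean p] by simp

lemma continuous_map_compose_continuous_on:
  "continuous_on UNIV f \<Longrightarrow> continuous_map Z euclidean a \<Longrightarrow> continuous_map Z euclidean (\<lambda>z. f (a z))"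
  using continuous_map_compose[of Z euclidean a euclidean f] by (simp add: o_def)

lemma continuous_map_if_le:
  assumes "continuous_map Z euclideanreal v" "continuous_map Z euclideanreal c"
    and "continuous_map Z T f" "continuous_map Z T g"
    and "\<And>z. z \<in> topspace Z \<Longrightarrow> v z = c z \<Longrightarrow> f z = g z"
  shows "continuous_map Z T (\<lambda>z. if v z \<le> c z then f z else g z)"
  by (rule continuous_map_cases_le) (use assms in \<open>auto intro: continuous_map_from_subtopology\<close>)

text \<open>Reparametrisations of \<open>[0,1]\<close> are composed with \<open>clamp\<close>, which makes every piece of a
  piecewise definition continuous on all of \<open>\<real>\<close>, ready for \<open>continuous_map_if_le\<close>.\<close>
definition clamp :: "real \<Rightarrow> real" where
  "clamp x = max 0 (min 1 x)"

lemma clamp_eq [simp]: "x \<in> {0..1} \<Longrightarrow> clamp x = x"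
  by (auto simp: clamp_def)

lemma clamp_eq_1 [simp]: "1 \<le> x \<Longrightarrow> clamp x = 1"
  by (simp add: clamp_def)

lemma clamp_in_interval [simp]: "clamp x \<in> {0..1}" "0 \<le> clamp x" "clamp x \<le> 1"
  by (auto simp: clamp_def)

lemma continuous_map_clamp:
  "continuous_map Z euclideanreal f \<Longrightarrow> continuous_map Z unit_interval (\<lambda>z. clamp (f z))"
  unfolding clamp_def continuous_map_in_subtopology by (auto intro!: continuous_intros)

definition path_join :: "(real \<Rightarrow> 'a) \<Rightarrow> (real \<Rightarrow> 'a) \<Rightarrow> real \<Rightarrow> 'a" where
  "path_join \<alpha> \<beta> s = (if s \<le> 1/2 then \<alpha> (clamp (2 * s)) else \<beta> (clamp (2 * s - 1)))"

lemma continuous_map_path_join: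
  assumes \<alpha>: "continuous_map (prod_topology Z unit_interval) T (\<lambda>w. \<alpha> (fst w) (snd w))"
    and \<beta>: "continuous_map (prod_topology Z unit_interval) T (\<lambda>w. \<beta> (fst w) (snd w))"
    and \<alpha>\<beta>: "\<And>z. z \<in> topspace Z \<Longrightarrow> \<alpha> z 1 = \<beta> z 0"
  shows "continuous_map (prod_topology Z unit_interval) T (\<lambda>w. path_join (\<alpha> (fst w)) (\<beta> (fst w)) (snd w))"
proof -
  have snd: "continuous_map (prod_topology Z unit_interval) euclideanreal snd"
    by (rule continuous_map_interval_real[OF continuous_map_snd])
  have reparam: "continuous_map (prod_topology Z unit_interval) T (\<lambda>w. \<gamma> (fst w) (clamp (2 * snd w - c)))"
    if "continuous_map (prod_topology Z unit_interval) T (\<lambda>w. \<gamma> (fst w) (snd w))" for \<gamma> c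
  proof -
    have "continuous_map (prod_topology Z unit_interval) (prod_topology Z unit_interval)
        (\<lambda>w. (fst w, clamp (2 * snd w - c)))"
      by (intro continuous_map_pairedI continuous_map_fst continuous_map_clamp continuous_intros snd)
    from continuous_map_compose[OF this that] show ?thesis
      by (simp add: o_def)
  qed
  show ?thesis
    unfolding path_join_def
  proof (rule continuous_map_if_le[OF snd continuous_map_canonical_const])
    show "continuous_map (prod_topology Z unit_interval) T (\<lambda>w. \<alpha> (fst w) (clamp (2 * snd w)))"
      using reparam[OF \<alpha>, of 0] by simp
    show "continuous_map (prod_topology Z unit_interval) T (\<lambda>w. \<beta> (fst w) (clamp (2 * snd w - 1)))"
      using reparam[OF \<beta>, of 1] by simp
  next
    fix w assume "w \<in> topspace (prod_topology Z unit_interval)" "snd w = 1/2"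
    then have "2 * snd w = 1" "fst w \<in> topspace Z"
      by auto
    then show "\<alpha> (fst w) (clamp (2 * snd w)) = \<beta> (fst w) (clamp (2 * snd w - 1))"
      by (simp add: \<alpha>\<beta>)
  qed
qed

section \<open>Homotopy fibres and loop spaces\<close>

lemma topspace_hofib:
  "topspace (hofib X Y y0 r) =
    {(x, \<gamma>). x \<in> topspace X \<and> \<gamma> \<in> mapspace unit_interval Y \<and> \<gamma> 0 = r x \<and> \<gamma> 1 = y0}"
  by (auto simp: hofib_def)

lemma topspace_loopspace:
  "topspace (loopspace Z z0) = {\<gamma> \<in> mapspace unit_interval Z. \<gamma> 0 = z0 \<and> \<gamma> 1 = z0}"
  by (auto simp: loopspace_def)

lemma continuous_map_hofib_fst:
  "continuous_map Z (hofib X Y y0 r) p \<Longrightarrow> continuous_map Z X (\<lambda>z. fst (p z))"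
  by (simp add: hofib_def continuous_map_in_subtopology continuous_map_pairwise o_def)

lemma continuous_map_hofib_snd:
  "continuous_map Z (hofib X Y y0 r) p \<Longrightarrow>
    continuous_map Z (compact_open unit_interval Y) (\<lambda>z. snd (p z))"
  by (simp add: hofib_def continuous_map_in_subtopology continuous_map_pairwise o_def)

lemma continuous_map_loopspace_path:
  "continuous_map Z (loopspace W w0) p \<Longrightarrow> continuous_map Z (compact_open unit_interval W) p"
  by (simp add: loopspace_def continuous_map_in_subtopology)

lemma continuous_map_into_hofib:
  assumes "continuous_map Z X f" "continuous_map Z (compact_open unit_interval Y) g"
    and "\<And>z. z \<in> topspace Z \<Longrightarrow> g z 0 = r (f z) \<and> g z 1 = y0"
  shows "continuous_map Z (hofib X Y y0 r) (\<lambda>z. (f z, g z))"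
  using assms unfolding hofib_def continuous_map_in_subtopology
  by (auto intro: continuous_map_pairedI)

corollary continuous_map_into_hofib_curry:
  assumes "continuous_map Z X f"
    and "continuous_map (prod_topology Z unit_interval) Y (\<lambda>w. F (fst w) (snd w))"
    and "\<And>z. z \<in> topspace Z \<Longrightarrow> F z 0 = r (f z) \<and> F z 1 = y0"
  shows "continuous_map Z (hofib X Y y0 r) (\<lambda>z. (f z, restrict (F z) {0..1}))"
  using assms by (intro continuous_map_into_hofib continuous_map_path_curry) auto

lemma continuous_map_into_loopspace_curry:
  assumes "continuous_map (prod_topology Z unit_interval) W (\<lambda>v. F (fst v) (snd v))"
    and "\<And>z. z \<in> topspace Z \<Longrightarrow> F z 0 = w0 \<and> F z 1 = w0"
  shows "continuous_map Z (loopspace W w0) (\<lambda>z. restrict (F z) {0..1})"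
  using assms continuous_map_path_curry[OF assms(1)]
  by (auto simp: loopspace_def continuous_map_in_subtopology)

lemma homotopic_with_trueI:
  assumes "continuous_map (prod_topology unit_interval X) Y H"
    and "\<And>x. x \<in> topspace X \<Longrightarrow> H (0, x) = f x" "\<And>x. x \<in> topspace X \<Longrightarrow> H (1, x) = g x"
  shows "homotopic_with (\<lambda>x. True) X Y f g"
  using assms by (subst homotopic_with) auto

section \<open>Maps out of a contractible space\<close>

context
  fixes C :: "'c topology" and Q :: "'q topology" and c0 :: 'c and q0 :: 'q
    and g :: "'c \<Rightarrow> 'q" and k :: "'c \<times> real \<Rightarrow> 'c"
  assumes c0: "c0 \<in> topspace C" and g: "continuous_map C Q g" and g_c0: "g c0 = q0"
    and k: "continuous_map (prod_topology C unit_interval) C k"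
    and k_0: "\<And>c. c \<in> topspace C \<Longrightarrow> k (c, 0) = c"
    and k_1: "\<And>c. c \<in> topspace C \<Longrightarrow> k (c, 1) = c0"
    and k_c0: "\<And>u. u \<in> {0..1} \<Longrightarrow> k (c0, u) = c0"
begin

definition contraction_loop :: "'c \<times> (real \<Rightarrow> 'q) \<Rightarrow> real \<Rightarrow> 'q" where
  "contraction_loop p = restrict (path_join (\<lambda>v. g (k (fst p, clamp (1 - v)))) (snd p)) {0..1}"

lemma continuous_map_contraction_path:
  "continuous_map Z C a \<Longrightarrow> continuous_map Z euclideanreal t \<Longrightarrow>
    continuous_map Z Q (\<lambda>z. g (k (a z, clamp (t z))))"
  by (rule continuous_map_compose[OF continuous_map_compose_pair[OF k] g, unfolded o_def])
    (auto intro: continuous_map_clamp)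

lemma continuous_map_contraction_loop:
  "continuous_map (hofib C Q q0 g) (loopspace Q q0) contraction_loop"
  unfolding contraction_loop_def
proof (rule continuous_map_into_loopspace_curry)
  show "continuous_map (prod_topology (hofib C Q q0 g) unit_interval) Q
      (\<lambda>w. path_join (\<lambda>v. g (k (fst (fst w), clamp (1 - v)))) (snd (fst w)) (snd w))"
  proof (rule continuous_map_path_join[where \<alpha> = "\<lambda>p v. g (k (fst p, clamp (1 - v)))" and \<beta> = snd])
    show "continuous_map (prod_topology (hofib C Q q0 g) unit_interval) Q
        (\<lambda>w. g (k (fst (fst w), clamp (1 - snd w))))"
      by (intro continuous_map_contraction_path continuous_map_hofib_fst continuous_map_fst
          continuous_intros coordinate_intros; rule continuous_map_ident)
    show "continuous_map (prod_topology (hofib C Q q0 g) unit_interval) Q (\<lambda>w. snd (fst w) (snd w))"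
      by (rule continuous_map_path_apply[OF continuous_map_hofib_snd[OF continuous_map_fst] continuous_map_snd])
  next
    fix p assume "p \<in> topspace (hofib C Q q0 g)"
    then show "g (k (fst p, clamp (1 - 1))) = snd p 0"
      by (auto simp: topspace_hofib k_0 split: prod.splits)
  qed
next
  fix p assume "p \<in> topspace (hofib C Q q0 g)"
  then show "path_join (\<lambda>v. g (k (fst p, clamp (1 - v)))) (snd p) 0 = q0 \<and>
      path_join (\<lambda>v. g (k (fst p, clamp (1 - v)))) (snd p) 1 = q0"
    by (auto simp: topspace_hofib path_join_def k_1 g_c0 split: prod.splits)
qed

lemma contraction_loop_base:
  "\<omega> \<in> topspace (loopspace Q q0) \<Longrightarrow>
    contraction_loop (c0, \<omega>) = restrict (\<lambda>s. \<omega> (clamp (max 0 (2 * s - 1)))) {0..1}"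
  unfolding contraction_loop_def
  by (intro restrict_ext) (auto simp: path_join_def topspace_loopspace k_c0 g_c0)

lemma homotopic_contraction_loop_base:
  "homotopic_with (\<lambda>f. True) (loopspace Q q0) (loopspace Q q0) (contraction_loop \<circ> Pair c0) id"
proof (rule homotopic_with_trueI)
  show "continuous_map (prod_topology unit_interval (loopspace Q q0)) (loopspace Q q0)
      (\<lambda>z. restrict (\<lambda>s. snd z (clamp ((1 - fst z) * max 0 (2 * s - 1) + fst z * s))) {0..1})"
  proof (rule continuous_map_into_loopspace_curry)
    show "continuous_map (prod_topology (prod_topology unit_interval (loopspace Q q0)) unit_interval) Q
        (\<lambda>v. snd (fst v) (clamp ((1 - fst (fst v)) * max 0 (2 * snd v - 1) + fst (fst v) * snd v)))"
      by (rule continuous_map_path_apply[OF continuous_map_loopspace_path[OF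
            continuous_map_snd_comp[OF continuous_map_fst]]],
          intro continuous_map_clamp continuous_intros coordinate_intros; rule continuous_map_ident)
  qed (auto simp: topspace_loopspace)
next
  fix \<omega> assume \<omega>: "\<omega> \<in> topspace (loopspace Q q0)"
  then show "restrict (\<lambda>s. snd (0, \<omega>) (clamp ((1 - fst (0, \<omega>)) * max 0 (2 * s - 1) + fst (0, \<omega>) * s))) {0..1}
      = (contraction_loop \<circ> Pair c0) \<omega>"
    by (simp add: contraction_loop_base)
  show "restrict (\<lambda>s. snd (1, \<omega>) (clamp ((1 - fst (1, \<omega>)) * max 0 (2 * s - 1) + fst (1, \<omega>) * s))) {0..1}
      = id \<omega>"
    using \<omega> by (auto simp: topspace_loopspace intro: restrict_path_eqI)
qed

definition contraction_homotopy :: "real \<times> 'c \<times> (real \<Rightarrow> 'q) \<Rightarrow> 'c \<times> (real \<Rightarrow> 'q)" where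
  "contraction_homotopy z = (k (fst (snd z), clamp (1 - fst z)),
     restrict (\<lambda>s. if s \<le> (1 - fst z) / 2 then g (k (fst (snd z), clamp (1 - fst z - 2 * s)))
       else snd (snd z) (clamp ((2 * s - 1 + fst z) / (1 + fst z)))) {0..1})"

lemma continuous_map_contraction_homotopy:
  "continuous_map (prod_topology unit_interval (hofib C Q q0 g)) (hofib C Q q0 g) contraction_homotopy"
  unfolding contraction_homotopy_def
proof (rule continuous_map_into_hofib_curry)
  show "continuous_map (prod_topology unit_interval (hofib C Q q0 g)) C (\<lambda>z. k (fst (snd z), clamp (1 - fst z)))"
    by (rule continuous_map_compose_pair[OF k continuous_map_hofib_fst[OF continuous_map_snd]],
        intro continuous_map_clamp continuous_intros coordinate_intros; rule continuous_map_ident)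
  let ?Z = "prod_topology (prod_topology unit_interval (hofib C Q q0 g)) unit_interval"
  show "continuous_map ?Z Q (\<lambda>v. if snd v \<le> (1 - fst (fst v)) / 2
      then g (k (fst (snd (fst v)), clamp (1 - fst (fst v) - 2 * snd v)))
      else snd (snd (fst v)) (clamp ((2 * snd v - 1 + fst (fst v)) / (1 + fst (fst v)))))"
  proof (rule continuous_map_if_le)
    show "continuous_map ?Z Q (\<lambda>v. g (k (fst (snd (fst v)), clamp (1 - fst (fst v) - 2 * snd v))))"
      by (rule continuous_map_contraction_path[OF continuous_map_hofib_fst[OF continuous_map_snd_comp[OF
            continuous_map_fst]]], intro continuous_intros coordinate_intros; rule continuous_map_ident)
    show "continuous_map ?Z Q (\<lambda>v. snd (snd (fst v)) (clamp ((2 * snd v - 1 + fst (fst v)) / (1 + fst (fst v)))))"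
      by (rule continuous_map_path_apply[OF continuous_map_hofib_snd[OF continuous_map_snd_comp[OF
            continuous_map_fst]]], intro continuous_map_clamp continuous_intros coordinate_intros;
          (rule continuous_map_ident)?) auto
    show "continuous_map ?Z euclideanreal snd"
      by (rule continuous_map_interval_real[OF continuous_map_snd])
    show "continuous_map ?Z euclideanreal (\<lambda>v. (1 - fst (fst v)) / 2)"
      by (intro continuous_intros coordinate_intros; (rule continuous_map_ident)?) simp
  next
    fix v assume v: "v \<in> topspace ?Z" and s: "snd v = (1 - fst (fst v)) / 2"
    obtain u c \<omega> s where v_eq: "v = ((u, c, \<omega>), s)"
      by (metis prod.collapse)
    with s have zero: "1 - u - 2 * s = 0" "2 * s - 1 + u = 0"
      by simp_all
    show "g (k (fst (snd (fst v)), clamp (1 - fst (fst v) - 2 * snd v))) =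
        snd (snd (fst v)) (clamp ((2 * snd v - 1 + fst (fst v)) / (1 + fst (fst v))))"
      using v unfolding v_eq fst_conv snd_conv zero by (simp add: topspace_hofib k_0)
  qed
qed (auto simp: topspace_hofib split: prod.splits)

lemma homotopic_contraction_loop_hofib:
  "homotopic_with (\<lambda>f. True) (hofib C Q q0 g) (hofib C Q q0 g) (Pair c0 \<circ> contraction_loop) id"
proof (rule homotopic_with_trueI[OF continuous_map_contraction_homotopy])
  fix p assume "p \<in> topspace (hofib C Q q0 g)"
  then obtain c \<omega> where p: "p = (c, \<omega>)" "c \<in> topspace C" "\<omega> \<in> mapspace unit_interval Q" "\<omega> 0 = g c"
    by (auto simp: topspace_hofib)
  then show "contraction_homotopy (0, p) = (Pair c0 \<circ> contraction_loop) p"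
    by (auto simp: contraction_homotopy_def contraction_loop_def path_join_def k_1 intro!: restrict_ext)
  show "contraction_homotopy (1, p) = id p"
    using p by (auto simp: contraction_homotopy_def k_0 intro!: restrict_path_eqI)
qed

theorem hofib_homotopy_equivalent_loopspace_of_contractible:
  "hofib C Q q0 g homotopy_equivalent_space loopspace Q q0"
  unfolding homotopy_equivalent_space_def
proof (intro exI conjI)
  have "continuous_map (loopspace Q q0) (hofib C Q q0 g) (\<lambda>\<omega>. (c0, \<omega>))"
    using c0 g_c0
    by (intro continuous_map_into_hofib continuous_map_loopspace_path[OF continuous_map_ident])
      (auto simp: topspace_loopspace)
  then show "continuous_map (loopspace Q q0) (hofib C Q q0 g) (Pair c0)"
    by (simp add: eta_contract_eq)
qed (rule continuous_map_contraction_loop homotopic_contraction_loop_base homotopic_contraction_loop_hofib)+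

end

section \<open>A retraction of the square onto an arc of its boundary\<close>

text \<open>\<open>radial_proj\<close> is the radial projection from \<open>(-1, 1/2)\<close> onto the bottom, right and top edges;
  \<open>squeeze\<close> first folds the lower half of the left edge onto the bottom edge and \<open>unfold_edge\<close>
  unfolds it again, so that \<open>square_retraction\<close> retracts the square onto \<open>square_arc\<close>.\<close>
definition squeeze :: "real \<times> real \<Rightarrow> real \<times> real" where
  "squeeze = (\<lambda>(t, s). (t + (1 - t) * max 0 (1 - 2 * s) / 2, max 0 ((2 * s - 1 + t) / max 1 (1 + t))))"

definition radial_proj :: "real \<times> real \<Rightarrow> real \<times> real" where
  "radial_proj = (\<lambda>(t, s). let m = max (1/2) (max ((t + 1) / 2) (2 * \<bar>s - 1/2\<bar>))
     in (-1 + (t + 1) / m, 1/2 + (s - 1/2) / m))"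

definition unfold_edge :: "real \<times> real \<Rightarrow> real \<times> real" where
  "unfold_edge = (\<lambda>(a, b). ((1 - b) * max 0 (2 * a - 1) + b * a, (1 - b) * max 0 ((1 - 2 * a) / 2) + b))"

definition edge_proj :: "real \<times> real \<Rightarrow> real \<times> real" where
  "edge_proj = radial_proj \<circ> squeeze"

definition square_retraction :: "real \<times> real \<Rightarrow> real \<times> real" where
  "square_retraction = unfold_edge \<circ> edge_proj"

definition square_edges :: "(real \<times> real) set" where
  "square_edges = {(a, b). a \<in> {0..1} \<and> b \<in> {0..1} \<and> (b = 0 \<or> b = 1 \<or> a = 1)}"

definition square_arc :: "(real \<times> real) set" where
  "square_arc = {(t, s). t \<in> {0..1} \<and> s \<in> {0..1} \<and> (s = 0 \<or> s = 1 \<or> t = 1 \<or> (t = 0 \<and> s \<le> 1/2))}"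

lemma squeeze_in_square:
  assumes "p \<in> {0..1} \<times> {0..1}"
  shows "squeeze p \<in> {0..1} \<times> {0..1}"
proof -
  obtain t s where p: "p = (t, s)" "t \<in> {0..1}" "s \<in> {0..1}"
    using assms by auto
  have "max 0 (1 - 2 * s) \<le> 1"
    using p by auto
  then have "(1 - t) * max 0 (1 - 2 * s) \<le> 1 - t"
    using p by (auto intro: mult_left_le)
  moreover have "(2 * s - 1 + t) / (1 + t) \<le> 1"
    using p by (simp add: divide_le_eq)
  moreover have "max 1 (1 + t) = 1 + t"
    using p by simp
  ultimately show ?thesis
    using p by (auto simp: squeeze_def)
qed

lemma squeeze_square_arc:
  "t \<in> {0..1} \<Longrightarrow> squeeze (t, 0) = ((1 + t) / 2, 0)"
  "0 \<le> t \<Longrightarrow> squeeze (t, 1) = (t, 1)"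
  "0 \<le> s \<Longrightarrow> squeeze (1, s) = (1, s)"
  "s \<le> 1/2 \<Longrightarrow> squeeze (0, s) = ((1 - 2 * s) / 2, 0)"
  by (auto simp: squeeze_def max_def field_simps divide_le_0_iff)

lemma radial_proj_in_square_edges:
  assumes "p \<in> {0..1} \<times> {0..1}"
  shows "radial_proj p \<in> square_edges"
proof -
  obtain t s where p: "p = (t, s)" "t \<in> {0..1}" "s \<in> {0..1}"
    using assms by auto
  define m where "m = max ((t + 1) / 2) (2 * \<bar>s - 1/2\<bar>)"
  define a where "a = (t + 1) / m"
  define b where "b = (s - 1/2) / m"
  have m: "max (1/2) (max ((t + 1) / 2) (2 * \<bar>s - 1/2\<bar>)) = m" "m > 0"
    using p unfolding m_def max_def by (auto simp: abs_if)
  have "(t + 1) / 2 \<le> m" "2 * \<bar>s - 1/2\<bar> \<le> m" "m \<le> t + 1"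
    using p by (auto simp: m_def abs_if)
  then have "1 \<le> a" "a \<le> 2" "\<bar>b\<bar> \<le> 1/2"
    using m by (simp_all add: a_def b_def le_divide_eq divide_le_eq abs_divide)
  moreover have "a = 2 \<or> b = 1/2 \<or> b = -1/2"
    using m p unfolding m_def a_def b_def by (auto simp: max_def abs_if field_simps split: if_splits)
  ultimately have "(-1 + a, 1/2 + b) \<in> square_edges"
    unfolding square_edges_def by auto
  then show ?thesis
    by (simp add: radial_proj_def p(1) m(1) a_def b_def)
qed

lemma radial_proj_square_edges: "p \<in> square_edges \<Longrightarrow> radial_proj p = p"
  by (auto simp: radial_proj_def square_edges_def max_def abs_if)

lemma unfold_edge_square_edges:
  "b = 0 \<Longrightarrow> a \<le> 1/2 \<Longrightarrow> unfold_edge (a, b) = (0, (1 - 2 * a) / 2)"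
  "b = 0 \<Longrightarrow> 1/2 \<le> a \<Longrightarrow> unfold_edge (a, b) = (2 * a - 1, 0)"
  "b = 1 \<Longrightarrow> unfold_edge (a, b) = (a, 1)"
  "a = 1 \<Longrightarrow> unfold_edge (a, b) = (1, b)"
  by (auto simp: unfold_edge_def max_def algebra_simps)

lemma edge_proj_in_square_edges: "p \<in> {0..1} \<times> {0..1} \<Longrightarrow> edge_proj p \<in> square_edges"
  by (simp add: edge_proj_def radial_proj_in_square_edges squeeze_in_square)

lemma edge_proj_square_arc:
  "t \<in> {0..1} \<Longrightarrow> edge_proj (t, 0) = ((1 + t) / 2, 0)"
  "t \<in> {0..1} \<Longrightarrow> edge_proj (t, 1) = (t, 1)"
  "s \<in> {0..1} \<Longrightarrow> edge_proj (1, s) = (1, s)"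
  "s \<in> {0..1/2} \<Longrightarrow> edge_proj (0, s) = ((1 - 2 * s) / 2, 0)"
  by (auto simp: edge_proj_def squeeze_square_arc intro!: radial_proj_square_edges simp: square_edges_def)

lemma square_retraction_square_arc: "p \<in> square_arc \<Longrightarrow> square_retraction p = p"
  by (auto simp: square_arc_def square_retraction_def edge_proj_square_arc unfold_edge_square_edges field_simps)

lemma unfold_edge_in_square_arc:
  assumes "q \<in> square_edges"
  shows "unfold_edge q \<in> square_arc" "edge_proj (unfold_edge q) = q"
proof -
  obtain a b where q: "q = (a, b)" "a \<in> {0..1}" "b \<in> {0..1}" "b = 0 \<or> b = 1 \<or> a = 1"
    using assms by (auto simp: square_edges_def)
  consider "b = 0" "a \<le> 1/2" | "b = 0" "1/2 \<le> a" | "b = 1" | "a = 1"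
    using q by linarith
  then show "unfold_edge q \<in> square_arc" "edge_proj (unfold_edge q) = q"
    by (cases; use q in \<open>auto simp: square_arc_def unfold_edge_square_edges edge_proj_square_arc field_simps\<close>)+
qed

lemma square_retraction_in_square_arc:
  "p \<in> {0..1} \<times> {0..1} \<Longrightarrow> square_retraction p \<in> square_arc"
  by (simp add: square_retraction_def edge_proj_in_square_edges unfold_edge_in_square_arc)

lemma edge_proj_square_retraction:
  "p \<in> {0..1} \<times> {0..1} \<Longrightarrow> edge_proj (square_retraction p) = edge_proj p"
  by (simp add: square_retraction_def edge_proj_in_square_edges unfold_edge_in_square_arc)

lemma continuous_on_edge_proj: "continuous_on UNIV edge_proj"
  unfolding edge_proj_def squeeze_def radial_proj_def case_prod_unfold Let_def
  by (intro continuous_intros) (auto simp: max_def)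

lemma continuous_on_square_retraction: "continuous_on UNIV square_retraction"
  unfolding square_retraction_def
  by (intro continuous_on_compose continuous_on_edge_proj)
    (auto simp: unfold_edge_def case_prod_unfold intro!: continuous_intros)

definition square_homotopy :: "real \<times> (real \<times> real) \<Rightarrow> real \<times> real" where
  "square_homotopy w = (1 - fst w) *\<^sub>R square_retraction (snd w) + fst w *\<^sub>R snd w"

lemma continuous_on_square_homotopy: "continuous_on UNIV square_homotopy"
  unfolding square_homotopy_def
  by (intro continuous_intros continuous_on_compose2[OF continuous_on_square_retraction]) auto

lemma square_homotopy_square_arc: "p \<in> square_arc \<Longrightarrow> square_homotopy (u, p) = p"
  by (simp add: square_homotopy_def square_retraction_square_arc algebra_simps)

section \<open>The two homotopy equivalences\<close>

text \<open>A point \<open>((x, \<delta>), \<Omega>)\<close> of \<open>hofib(transfer)\<close> is determined by \<open>x\<close>, the path \<open>fst \<circ> \<Omega>\<close> in \<open>Y\<close> and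
  the square \<open>(t, s) \<mapsto> snd (\<Omega> t) s\<close> in \<open>X\<close>, since \<open>\<delta>\<close> is the upper half of its left edge.\<close>
definition square_at :: "(real \<Rightarrow> 'b \<times> (real \<Rightarrow> 'a)) \<Rightarrow> real \<times> real \<Rightarrow> 'a" where
  "square_at \<Omega> p = snd (\<Omega> (clamp (fst p))) (clamp (snd p))"

definition square_point ::
    "'a \<Rightarrow> (real \<Rightarrow> 'b) \<Rightarrow> (real \<times> real \<Rightarrow> 'a) \<Rightarrow> ('a \<times> (real \<Rightarrow> 'a)) \<times> (real \<Rightarrow> 'b \<times> (real \<Rightarrow> 'a))" where
  "square_point x y S =
    ((x, restrict (\<lambda>\<tau>. S (0, (1 + \<tau>) / 2)) {0..1}), restrict (\<lambda>t. (y t, restrict (\<lambda>s. S (t, s)) {0..1})) {0..1})"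

definition boundary :: "('a \<times> (real \<Rightarrow> 'a)) \<times> (real \<Rightarrow> 'b \<times> (real \<Rightarrow> 'a)) \<Rightarrow> 'a \<times> (real \<Rightarrow> 'b)" where
  "boundary q = (fst (fst q), restrict (\<lambda>t. fst (snd q t)) {0..1})"

lemma square_point_cong:
  assumes "x = x'" "\<And>t. t \<in> {0..1} \<Longrightarrow> y t = y' t" "\<And>p. p \<in> {0..1} \<times> {0..1} \<Longrightarrow> S p = S' p"
  shows "square_point x y S = square_point x' y' S'"
  using assms by (auto simp: square_point_def intro!: restrict_ext)

context
  fixes X :: "'a topology" and Y :: "'b topology" and x0 :: 'a and y0 :: 'b
    and r :: "'a \<Rightarrow> 'b" and l :: "'b \<Rightarrow> 'a" and h :: "'a \<times> real \<Rightarrow> 'a"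
  assumes x0: "x0 \<in> topspace X"
    and r: "continuous_map X Y r" and r_x0: "r x0 = y0"
    and l: "continuous_map Y X l" and l_y0: "l y0 = x0"
    and h: "continuous_map (prod_topology X unit_interval) X h"
    and h_0: "\<And>x. x \<in> topspace X \<Longrightarrow> h (x, 0) = x"
    and h_1: "\<And>x. x \<in> topspace X \<Longrightarrow> h (x, 1) = l (r x)"
    and h_x0: "\<And>t. t \<in> {0..1} \<Longrightarrow> h (x0, t) = x0"
begin

definition transfer :: "'a \<times> (real \<Rightarrow> 'a) \<Rightarrow> 'b \<times> (real \<Rightarrow> 'a)" where
  "transfer p = (r (fst p), restrict (path_join (\<lambda>v. h (fst p, clamp (1 - v))) (snd p)) {0..1})"

abbreviation transfer_fibre :: "(('a \<times> (real \<Rightarrow> 'a)) \<times> (real \<Rightarrow> 'b \<times> (real \<Rightarrow> 'a))) topology" where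
  "transfer_fibre \<equiv> hofib (hofib X X x0 (\<lambda>x. x)) (hofib Y X x0 l) (hofib_base y0 x0) transfer"

definition path_contraction :: "('a \<times> (real \<Rightarrow> 'a)) \<times> real \<Rightarrow> 'a \<times> (real \<Rightarrow> 'a)" where
  "path_contraction w =
    (snd (fst w) (snd w), restrict (\<lambda>s. snd (fst w) (clamp (snd w + (1 - snd w) * s))) {0..1})"

lemma continuous_map_h_clamp:
  "continuous_map Z X a \<Longrightarrow> continuous_map Z euclideanreal t \<Longrightarrow>
    continuous_map Z X (\<lambda>z. h (a z, clamp (t z)))"
  by (rule continuous_map_compose_pair[OF h]) (auto intro: continuous_map_clamp)

lemma continuous_map_transfer:
  "continuous_map (hofib X X x0 (\<lambda>x. x)) (hofib Y X x0 l) transfer"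
  unfolding transfer_def
proof (rule continuous_map_into_hofib_curry)
  show "continuous_map (hofib X X x0 (\<lambda>x. x)) Y (\<lambda>p. r (fst p))"
    by (rule continuous_map_compose[OF continuous_map_hofib_fst[OF continuous_map_ident] r, unfolded o_def])
  show "continuous_map (prod_topology (hofib X X x0 (\<lambda>x. x)) unit_interval) X
      (\<lambda>w. path_join (\<lambda>v. h (fst (fst w), clamp (1 - v))) (snd (fst w)) (snd w))"
  proof (rule continuous_map_path_join[where \<alpha> = "\<lambda>p v. h (fst p, clamp (1 - v))" and \<beta> = snd])
    show "continuous_map (prod_topology (hofib X X x0 (\<lambda>x. x)) unit_interval) X
        (\<lambda>w. h (fst (fst w), clamp (1 - snd w)))"
      by (intro continuous_map_h_clamp continuous_map_hofib_fst continuous_map_fst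
          continuous_intros coordinate_intros; rule continuous_map_ident)
    show "continuous_map (prod_topology (hofib X X x0 (\<lambda>x. x)) unit_interval) X (\<lambda>w. snd (fst w) (snd w))"
      by (rule continuous_map_path_apply[OF continuous_map_hofib_snd[OF continuous_map_fst] continuous_map_snd])
  qed (auto simp: topspace_hofib h_0 split: prod.splits)
qed (auto simp: topspace_hofib path_join_def h_1 split: prod.splits)

lemma transfer_base: "transfer (hofib_base x0 x0) = hofib_base y0 x0"
  by (auto simp: transfer_def hofib_base_def path_join_def r_x0 h_x0 intro!: restrict_ext)

lemma continuous_map_path_contraction:
  "continuous_map (prod_topology (hofib X X x0 (\<lambda>x. x)) unit_interval) (hofib X X x0 (\<lambda>x. x)) path_contraction"
  unfolding path_contraction_def
proof (rule continuous_map_into_hofib_curry)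
  show "continuous_map (prod_topology (hofib X X x0 (\<lambda>x. x)) unit_interval) X (\<lambda>w. snd (fst w) (snd w))"
    by (rule continuous_map_path_apply[OF continuous_map_hofib_snd[OF continuous_map_fst] continuous_map_snd])
  show "continuous_map (prod_topology (prod_topology (hofib X X x0 (\<lambda>x. x)) unit_interval) unit_interval) X
      (\<lambda>v. snd (fst (fst v)) (clamp (snd (fst v) + (1 - snd (fst v)) * snd v)))"
    by (rule continuous_map_path_apply[OF continuous_map_hofib_snd[OF continuous_map_fst_comp[OF
          continuous_map_fst]]], intro continuous_map_clamp continuous_intros coordinate_intros;
        rule continuous_map_ident)
qed (auto simp: topspace_hofib split: prod.splits)

lemma hofib_transfer_homotopy_equivalent_loopspace:
  "transfer_fibre homotopy_equivalent_space loopspace (hofib Y X x0 l) (hofib_base y0 x0)"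
proof (rule hofib_homotopy_equivalent_loopspace_of_contractible)
  show "hofib_base x0 x0 \<in> topspace (hofib X X x0 (\<lambda>x. x))"
    using x0 restrict_in_mapspace[of unit_interval X "\<lambda>_. x0"] by (simp add: hofib_base_def topspace_hofib)
  fix p assume "p \<in> topspace (hofib X X x0 (\<lambda>x. x))"
  then obtain x \<delta> where p: "p = (x, \<delta>)" "\<delta> \<in> mapspace unit_interval X" "\<delta> 0 = x" "\<delta> 1 = x0"
    by (auto simp: topspace_hofib)
  have "restrict (\<lambda>s. \<delta> (clamp (0 + (1 - 0) * s))) {0..1} = \<delta>"
    using p by (intro restrict_path_eqI) auto
  then show "path_contraction (p, 0) = p"
    using p by (simp add: path_contraction_def)
  show "path_contraction (p, 1) = hofib_base x0 x0"
    using p by (simp add: path_contraction_def hofib_base_def)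
next
  fix u :: real assume "u \<in> {0..1}"
  then show "path_contraction (hofib_base x0 x0, u) = hofib_base x0 x0"
    by (auto simp: path_contraction_def hofib_base_def intro!: restrict_ext)
qed (rule continuous_map_transfer transfer_base continuous_map_path_contraction)+

definition fill_path :: "'a \<Rightarrow> (real \<Rightarrow> 'b) \<Rightarrow> real \<Rightarrow> 'a" where
  "fill_path x y = path_join (\<lambda>v. h (x, clamp v)) (\<lambda>v. l (y v))"

text \<open>\<open>clamp (a + 2 * b)\<close> parametrises \<open>square_edges\<close> by \<open>[0,1]\<close>: the bottom edge by \<open>a\<close>, while the
  top and right edges collapse to \<open>1\<close>.\<close>
definition square_filler :: "'a \<times> (real \<Rightarrow> 'b) \<Rightarrow> real \<times> real \<Rightarrow> 'a" where
  "square_filler z p = fill_path (fst z) (snd z) (clamp (fst (edge_proj p) + 2 * snd (edge_proj p)))"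

lemma square_filler_square_arc:
  assumes "z \<in> topspace (hofib X Y y0 r)"
  shows "t \<in> {0..1} \<Longrightarrow> square_filler z (t, 0) = l (snd z t)"
    and "t \<in> {0..1} \<Longrightarrow> square_filler z (t, 1) = x0"
    and "s \<in> {0..1} \<Longrightarrow> square_filler z (1, s) = x0"
    and "s \<in> {0..1/2} \<Longrightarrow> square_filler z (0, s) = h (fst z, 1 - 2 * s)"
proof -
  obtain x y where z: "z = (x, y)" "x \<in> topspace X" "y 0 = r x" "y 1 = y0"
    using assms by (auto simp: topspace_hofib)
  have end_point: "fill_path x y v = x0" if "1 \<le> v" for v
    using that z by (simp add: fill_path_def path_join_def l_y0)
  show "t \<in> {0..1} \<Longrightarrow> square_filler z (t, 0) = l (snd z t)"
    using z by (cases "t = 0") (auto simp: square_filler_def fill_path_def path_join_def edge_proj_square_arc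
        h_1 field_simps)
  show "t \<in> {0..1} \<Longrightarrow> square_filler z (t, 1) = x0" "s \<in> {0..1} \<Longrightarrow> square_filler z (1, s) = x0"
    using z by (auto simp: square_filler_def edge_proj_square_arc intro!: end_point)
  assume s: "s \<in> {0..1/2}"
  then have "square_filler z (0, s) = fill_path x y ((1 - 2 * s) / 2)"
    using z by (simp add: square_filler_def edge_proj_square_arc)
  also have "\<dots> = h (x, clamp (2 * ((1 - 2 * s) / 2)))"
    using s by (simp add: fill_path_def path_join_def)
  also have "2 * ((1 - 2 * s) / 2) = 1 - 2 * s"
    by simp
  finally show "square_filler z (0, s) = h (fst z, 1 - 2 * s)"
    using s z by simp
qed

lemma continuous_map_square_filler:
  assumes z: "continuous_map W (hofib X Y y0 r) z" and p: "continuous_map W euclidean p"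
  shows "continuous_map W X (\<lambda>w. square_filler (z w) (p w))"
proof -
  have join: "continuous_map (prod_topology (hofib X Y y0 r) unit_interval) X
      (\<lambda>w. path_join (\<lambda>v. h (fst (fst w), clamp v)) (\<lambda>v. l (snd (fst w) v)) (snd w))"
  proof (rule continuous_map_path_join[where \<alpha> = "\<lambda>z v. h (fst z, clamp v)" and \<beta> = "\<lambda>z v. l (snd z v)"])
    show "continuous_map (prod_topology (hofib X Y y0 r) unit_interval) X (\<lambda>w. h (fst (fst w), clamp (snd w)))"
      by (intro continuous_map_h_clamp continuous_map_hofib_fst[OF continuous_map_fst]
          continuous_map_interval_real[OF continuous_map_snd])
    show "continuous_map (prod_topology (hofib X Y y0 r) unit_interval) X (\<lambda>w. l (snd (fst w) (snd w)))"
      by (rule continuous_map_compose[OF continuous_map_path_apply[OF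
            continuous_map_hofib_snd[OF continuous_map_fst] continuous_map_snd] l, unfolded o_def])
  qed (auto simp: topspace_hofib h_1 split: prod.splits)
  have param: "continuous_map W (prod_topology (hofib X Y y0 r) unit_interval)
      (\<lambda>w. (z w, clamp (fst (edge_proj (p w)) + 2 * snd (edge_proj (p w)))))"
    using continuous_map_compose_continuous_on[OF continuous_on_edge_proj p]
    by (intro continuous_map_pairedI z continuous_map_clamp continuous_intros
        continuous_map_euclidean_fst continuous_map_euclidean_snd)
  show ?thesis
    using continuous_map_compose[OF param join] by (simp add: square_filler_def fill_path_def o_def)
qed

lemma continuous_map_square_point:
  assumes x: "continuous_map Z X x"
    and y: "continuous_map (prod_topology Z unit_interval) Y (\<lambda>w. y (fst w) (snd w))"
    and S: "continuous_map (prod_topology (prod_topology Z unit_interval) unit_interval) X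
      (\<lambda>v. S (fst (fst v)) (snd (fst v), snd v))"
    and y_0: "\<And>z. z \<in> topspace Z \<Longrightarrow> y z 0 = r (x z)"
    and y_1: "\<And>z. z \<in> topspace Z \<Longrightarrow> y z 1 = y0"
    and S_bottom: "\<And>z t. z \<in> topspace Z \<Longrightarrow> t \<in> {0..1} \<Longrightarrow> S z (t, 0) = l (y z t)"
    and S_top: "\<And>z t. z \<in> topspace Z \<Longrightarrow> t \<in> {0..1} \<Longrightarrow> S z (t, 1) = x0"
    and S_right: "\<And>z s. z \<in> topspace Z \<Longrightarrow> s \<in> {0..1} \<Longrightarrow> S z (1, s) = x0"
    and S_left: "\<And>z s. z \<in> topspace Z \<Longrightarrow> s \<in> {0..1/2} \<Longrightarrow> S z (0, s) = h (x z, 1 - 2 * s)"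
  shows "continuous_map Z transfer_fibre (\<lambda>z. square_point (x z) (y z) (S z))"
proof -
  have "continuous_map (prod_topology Z unit_interval) (prod_topology (prod_topology Z unit_interval) unit_interval)
      (\<lambda>w. ((fst w, 0), (1 + snd w) / 2))"
    by (intro continuous_map_pairedI continuous_map_fst)
      (auto simp: continuous_map_in_subtopology
        intro!: continuous_intros continuous_map_interval_real[OF continuous_map_snd])
  from continuous_map_compose[OF this S]
  have "continuous_map (prod_topology Z unit_interval) X (\<lambda>w. S (fst w) (0, (1 + snd w) / 2))"
    by (simp add: o_def)
  moreover have "x z \<in> topspace X" if "z \<in> topspace Z" for z
    using x that by (auto simp: continuous_map_def)
  ultimately have \<delta>: "continuous_map Z (hofib X X x0 (\<lambda>x. x)) (\<lambda>z. (x z, restrict (\<lambda>\<tau>. S z (0, (1 + \<tau>) / 2)) {0..1}))"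
    using x by (intro continuous_map_into_hofib_curry) (auto simp: S_left[of _ "1/2", simplified] S_top h_0)
  have \<Omega>: "continuous_map Z (compact_open unit_interval (hofib Y X x0 l))
      (\<lambda>z. restrict (\<lambda>t. (y z t, restrict (\<lambda>s. S z (t, s)) {0..1})) {0..1})"
    by (intro continuous_map_path_curry continuous_map_into_hofib_curry[OF y S]) (auto simp: S_bottom S_top)
  have start: "restrict (\<lambda>s. S z (0, s)) {0..1} =
      snd (transfer (x z, restrict (\<lambda>\<tau>. S z (0, (1 + \<tau>) / 2)) {0..1}))" if "z \<in> topspace Z" for z
  proof (unfold transfer_def snd_conv fst_conv, rule restrict_ext)
    fix s :: real assume "s \<in> {0..1}"
    then show "S z (0, s) =
        path_join (\<lambda>v. h (x z, clamp (1 - v))) (restrict (\<lambda>\<tau>. S z (0, (1 + \<tau>) / 2)) {0..1}) s"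
      using that by (cases "s \<le> 1/2") (auto simp: path_join_def S_left)
  qed
  show ?thesis
    unfolding square_point_def
    by (rule continuous_map_into_hofib[OF \<delta> \<Omega>])
      (auto simp: start transfer_def hofib_base_def y_0 y_1 S_right intro!: restrict_ext)
qed

definition filled :: "'a \<times> (real \<Rightarrow> 'b) \<Rightarrow> ('a \<times> (real \<Rightarrow> 'a)) \<times> (real \<Rightarrow> 'b \<times> (real \<Rightarrow> 'a))" where
  "filled z = square_point (fst z) (snd z) (square_filler z)"

lemma continuous_map_filled: "continuous_map (hofib X Y y0 r) transfer_fibre filled"
  unfolding filled_def
proof (rule continuous_map_square_point)
  show "continuous_map (hofib X Y y0 r) X fst"
    by (rule continuous_map_hofib_fst[OF continuous_map_ident])
  show "continuous_map (prod_topology (hofib X Y y0 r) unit_interval) Y (\<lambda>w. snd (fst w) (snd w))"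
    by (rule continuous_map_path_apply[OF continuous_map_hofib_snd[OF continuous_map_fst] continuous_map_snd])
  show "continuous_map (prod_topology (prod_topology (hofib X Y y0 r) unit_interval) unit_interval) X
      (\<lambda>v. square_filler (fst (fst v)) (snd (fst v), snd v))"
    by (rule continuous_map_square_filler[OF continuous_map_fst_comp[OF continuous_map_fst]])
      (intro continuous_map_euclidean_pair coordinate_intros; rule continuous_map_ident)
qed (auto simp: topspace_hofib square_filler_square_arc)

lemma topspace_transfer_fibreD:
  assumes "((x, \<delta>), \<Omega>) \<in> topspace transfer_fibre"
  shows "x \<in> topspace X" "\<delta> \<in> mapspace unit_interval X" "\<Omega> \<in> mapspace unit_interval (hofib Y X x0 l)"
    and "fst (\<Omega> 0) = r x" "fst (\<Omega> 1) = y0"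
    and "t \<in> {0..1} \<Longrightarrow> snd (\<Omega> t) \<in> mapspace unit_interval X"
    and "t \<in> {0..1} \<Longrightarrow> snd (\<Omega> t) 0 = l (fst (\<Omega> t))"
    and "t \<in> {0..1} \<Longrightarrow> snd (\<Omega> t) 1 = x0"
    and "s \<in> {0..1} \<Longrightarrow> snd (\<Omega> 1) s = x0"
    and "s \<in> {0..1/2} \<Longrightarrow> snd (\<Omega> 0) s = h (x, 1 - 2 * s)"
    and "\<tau> \<in> {0..1} \<Longrightarrow> snd (\<Omega> 0) ((1 + \<tau>) / 2) = \<delta> \<tau>"
proof -
  have q: "x \<in> topspace X" "\<delta> \<in> mapspace unit_interval X" "\<delta> 0 = x" "\<delta> 1 = x0"
    "\<Omega> \<in> mapspace unit_interval (hofib Y X x0 l)" "\<Omega> 0 = transfer (x, \<delta>)" "\<Omega> 1 = hofib_base y0 x0"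
    using assms by (auto simp: topspace_hofib)
  then show "x \<in> topspace X" "\<delta> \<in> mapspace unit_interval X" "\<Omega> \<in> mapspace unit_interval (hofib Y X x0 l)"
    "fst (\<Omega> 0) = r x" "fst (\<Omega> 1) = y0"
    by (simp_all add: transfer_def hofib_base_def)
  show "t \<in> {0..1} \<Longrightarrow> snd (\<Omega> t) \<in> mapspace unit_interval X"
    "t \<in> {0..1} \<Longrightarrow> snd (\<Omega> t) 0 = l (fst (\<Omega> t))" "t \<in> {0..1} \<Longrightarrow> snd (\<Omega> t) 1 = x0"
    using mapspace_in_topspace[OF q(5)] by (auto simp: topspace_hofib case_prod_unfold)
  show "s \<in> {0..1} \<Longrightarrow> snd (\<Omega> 1) s = x0"
    using q by (simp add: hofib_base_def)
  show "s \<in> {0..1/2} \<Longrightarrow> snd (\<Omega> 0) s = h (x, 1 - 2 * s)"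
    using q by (simp add: transfer_def path_join_def)
  assume "\<tau> \<in> {0..1}"
  then show "snd (\<Omega> 0) ((1 + \<tau>) / 2) = \<delta> \<tau>"
    using q by (cases "\<tau> = 0") (auto simp: transfer_def path_join_def h_0 field_simps)
qed

lemma continuous_map_boundary: "continuous_map transfer_fibre (hofib X Y y0 r) boundary"
  unfolding boundary_def
proof (rule continuous_map_into_hofib_curry)
  show "continuous_map transfer_fibre X (\<lambda>q. fst (fst q))"
    by (rule continuous_map_hofib_fst[OF continuous_map_hofib_fst[OF continuous_map_ident]])
  show "continuous_map (prod_topology transfer_fibre unit_interval) Y (\<lambda>w. fst (snd (fst w) (snd w)))"
    by (rule continuous_map_hofib_fst[OF continuous_map_path_apply[OF
          continuous_map_hofib_snd[OF continuous_map_fst] continuous_map_snd]])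
qed (auto dest: topspace_transfer_fibreD)

lemma boundary_filled: "z \<in> topspace (hofib X Y y0 r) \<Longrightarrow> boundary (filled z) = z"
  by (auto simp: boundary_def filled_def square_point_def topspace_hofib intro!: restrict_path_eqI)

lemma square_at_square_arc:
  assumes q: "q \<in> topspace transfer_fibre" and p: "p \<in> square_arc"
  shows "square_at (snd q) p = square_filler (boundary q) p"
proof -
  obtain x \<delta> \<Omega> where q_eq: "q = ((x, \<delta>), \<Omega>)"
    by (metis prod.collapse)
  note facts = topspace_transfer_fibreD[OF q[unfolded q_eq]]
  have b: "snd q = \<Omega>" "fst (boundary q) = x" "\<And>t. t \<in> {0..1} \<Longrightarrow> snd (boundary q) t = fst (\<Omega> t)"
    by (simp_all add: q_eq boundary_def)
  have "boundary q \<in> topspace (hofib X Y y0 r)"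
    using continuous_map_boundary q by (auto simp: continuous_map_def)
  note filler = square_filler_square_arc[OF this]
  from p consider t where "p = (t, 0)" "t \<in> {0..1}" | t where "p = (t, 1)" "t \<in> {0..1}"
    | s where "p = (1, s)" "s \<in> {0..1}" | s where "p = (0, s)" "s \<in> {0..1/2}"
    by (auto simp: square_arc_def)
  then show ?thesis
    by cases (auto simp: square_at_def b facts filler)
qed

lemma continuous_map_square_at:
  assumes "continuous_map W transfer_fibre q" "continuous_map W euclidean p"
  shows "continuous_map W X (\<lambda>w. square_at (snd (q w)) (p w))"
  unfolding square_at_def
  using assms
  by (intro continuous_map_path_apply[OF continuous_map_hofib_snd[OF continuous_map_path_apply[OF
        continuous_map_hofib_snd]]] continuous_map_clamp continuous_map_euclidean_fst continuous_map_euclidean_snd)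

definition deformation ::
    "real \<times> ('a \<times> (real \<Rightarrow> 'a)) \<times> (real \<Rightarrow> 'b \<times> (real \<Rightarrow> 'a)) \<Rightarrow> ('a \<times> (real \<Rightarrow> 'a)) \<times> (real \<Rightarrow> 'b \<times> (real \<Rightarrow> 'a))" where
  "deformation w = square_point (fst (fst (snd w))) (\<lambda>t. fst (snd (snd w) t))
     (\<lambda>p. square_at (snd (snd w)) (square_homotopy (fst w, p)))"

lemma continuous_map_deformation:
  "continuous_map (prod_topology unit_interval transfer_fibre) transfer_fibre deformation"
  unfolding deformation_def
proof (rule continuous_map_square_point)
  show "continuous_map (prod_topology unit_interval transfer_fibre) X (\<lambda>w. fst (fst (snd w)))"
    by (rule continuous_map_hofib_fst[OF continuous_map_hofib_fst[OF continuous_map_snd]])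
  show "continuous_map (prod_topology (prod_topology unit_interval transfer_fibre) unit_interval) Y
      (\<lambda>v. fst (snd (snd (fst v)) (snd v)))"
    by (rule continuous_map_hofib_fst[OF continuous_map_path_apply[OF
          continuous_map_hofib_snd[OF continuous_map_snd_comp[OF continuous_map_fst]] continuous_map_snd]])
  show "continuous_map (prod_topology (prod_topology (prod_topology unit_interval transfer_fibre) unit_interval) unit_interval) X
      (\<lambda>v. square_at (snd (snd (fst (fst v)))) (square_homotopy (fst (fst (fst v)), snd (fst v), snd v)))"
    by (rule continuous_map_square_at[OF continuous_map_snd_comp[OF continuous_map_fst_comp[OF continuous_map_fst]]],
        intro continuous_map_compose_continuous_on[OF continuous_on_square_homotopy]
          continuous_map_euclidean_pair coordinate_intros; rule continuous_map_ident)
qed (auto simp: square_homotopy_square_arc square_arc_def square_at_def topspace_transfer_fibreD)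

lemma deformation_1:
  assumes q: "q \<in> topspace transfer_fibre"
  shows "deformation (1, q) = q"
proof -
  obtain x \<delta> \<Omega> where q_eq: "q = ((x, \<delta>), \<Omega>)"
    by (metis prod.collapse)
  note facts = topspace_transfer_fibreD[OF q[unfolded q_eq]]
  have "restrict (\<lambda>s. square_at \<Omega> (t, s)) {0..1} = snd (\<Omega> t)" if "t \<in> {0..1}" for t
    using that facts by (auto simp: square_at_def intro!: restrict_path_eqI)
  moreover have "restrict (\<lambda>\<tau>. square_at \<Omega> (0, (1 + \<tau>) / 2)) {0..1} = \<delta>"
    using facts by (auto simp: square_at_def intro!: restrict_path_eqI)
  ultimately show ?thesis
    using facts(3) by (auto simp: deformation_def square_point_def q_eq square_homotopy_def intro!: restrict_path_eqI)
qed

lemma deformation_0: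
  assumes q: "q \<in> topspace transfer_fibre"
  shows "deformation (0, q) = filled (boundary q)"
  unfolding deformation_def filled_def
proof (rule square_point_cong)
  show "fst (fst (snd (0, q))) = fst (boundary q)"
    by (simp add: boundary_def)
  show "fst (snd (snd (0, q)) t) = snd (boundary q) t" if "t \<in> {0..1}" for t
    using that by (simp add: boundary_def)
  fix p :: "real \<times> real" assume p: "p \<in> {0..1} \<times> {0..1}"
  have "square_at (snd (snd (0, q))) (square_homotopy (fst (0, q), p)) = square_at (snd q) (square_retraction p)"
    by (simp add: square_homotopy_def)
  also have "\<dots> = square_filler (boundary q) (square_retraction p)"
    by (rule square_at_square_arc[OF q square_retraction_in_square_arc[OF p]])
  also have "\<dots> = square_filler (boundary q) p"
    by (simp add: square_filler_def edge_proj_square_retraction[OF p])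
  finally show "square_at (snd (snd (0, q))) (square_homotopy (fst (0, q), p)) = square_filler (boundary q) p" .
qed

lemma hofib_homotopy_equivalent_transfer_fibre: "hofib X Y y0 r homotopy_equivalent_space transfer_fibre"
  unfolding homotopy_equivalent_space_def
proof (intro exI conjI)
  show "homotopic_with (\<lambda>f. True) (hofib X Y y0 r) (hofib X Y y0 r) (boundary \<circ> filled) id"
    by (rule homotopic_with_equal) (auto intro: continuous_map_compose continuous_map_filled continuous_map_boundary
        simp: boundary_filled)
  show "homotopic_with (\<lambda>f. True) transfer_fibre transfer_fibre (filled \<circ> boundary) id"
    by (rule homotopic_with_trueI[OF continuous_map_deformation]) (simp_all add: deformation_0 deformation_1)
qed (rule continuous_map_filled continuous_map_boundary)+

end

theorem mainTheorem13:
  fixes X :: "'a topology" and Y :: "'b topology"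
    and x0 :: 'a and y0 :: 'b
    and r :: "'a \<Rightarrow> 'b" and l :: "'b \<Rightarrow> 'a"
    and h :: "'a \<times> real \<Rightarrow> 'a"
  assumes "x0 \<in> topspace X" and "y0 \<in> topspace Y"
    and "continuous_map X Y r" and "r x0 = y0"
    and "continuous_map Y X l" and "l y0 = x0"
    and "continuous_map (prod_topology X unit_interval) X h"
    and "\<And>x. x \<in> topspace X \<Longrightarrow> h (x, 0) = x"
    and "\<And>x. x \<in> topspace X \<Longrightarrow> h (x, 1) = l (r x)"
    and "\<And>t. t \<in> {0..1} \<Longrightarrow> h (x0, t) = x0"
  shows "hofib X Y y0 r homotopy_equivalent_space
           loopspace (hofib Y X x0 l) (hofib_base y0 x0)"
  using hofib_homotopy_equivalent_transfer_fibre[OF assms(1,3-)]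
    hofib_transfer_homotopy_equivalent_loopspace[OF assms(1,3-)]
  by (rule homotopy_eqv_trans)

end
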